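(* Let $\theta\in\mathbb{R}$, $\alpha_1>0$, $\alpha_2>0$, let $R_\theta=\begin{bmatrix}\cos\theta&-\sin\theta\\ \sin\theta&\cos\theta\end{bmatrix}$ acting on $\mathbb{R}^2$, and set $R_1=(1-\alpha_1)\mathrm{Id}+\alpha_1R_\theta$, $R_2=(1-\alpha_2)\mathrm{Id}-\alpha_2R_\theta$, $R=R_2R_1$, and $$\kappa=\alpha_1+\alpha_2-2\alpha_1\alpha_2\sin^2\theta-(\alpha_1-\alpha_2)\cos\theta.$$ Then $R_1$ is $\alpha_1$-conically nonexpansive, $R_2$ is $\alpha_2$-conically nonexpansive, and if $\kappa<0$ then $R$ is not conically nonexpansive (i.e., there is no $\alpha>0$ for which $R$ is $\alpha$-conically nonexpansive).
   Context: For $\alpha>0$, an operator $T\colon\mathbb{R}^2\to\mathbb{R}^2$ is $\alpha$-conically nonexpansive if there exists a nonexpansive ($1$-Lipschitz) $N$ with $T=(1-\alpha)\mathrm{Id}+\alpha N$. *)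

theory Defs
  imports "HOL-Analysis.Analysis"
begin

definition nonexpansive :: "(real^2 \<Rightarrow> real^2) \<Rightarrow> bool" where
  "nonexpansive N \<longleftrightarrow> (\<forall>x y. dist (N x) (N y) \<le> dist x y)"

definition conically_nonexpansive :: "real \<Rightarrow> (real^2 \<Rightarrow> real^2) \<Rightarrow> bool" where
  "conically_nonexpansive \<alpha> T \<longleftrightarrow>
     (\<exists>N. nonexpansive N \<and> (\<forall>x. T x = (1 - \<alpha>) *\<^sub>R x + \<alpha> *\<^sub>R N x))"

definition rot_mat :: "real \<Rightarrow> real^2^2" where
  "rot_mat \<theta> = vector [vector [cos \<theta>, - sin \<theta>], vector [sin \<theta>, cos \<theta>]]"

end

theory Submission
  imports Defs
begin

text \<open>Writing \<open>R = (1 - \<alpha>) Id + \<alpha> N\<close> with \<open>N\<close> nonexpansive, Cauchy-Schwarz gives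
  \<open>\<langle>R x - R y, x - y\<rangle> \<le> \<parallel>x - y\<parallel>\<^sup>2\<close> for every \<open>\<alpha> \<ge> 0\<close>. For the linear map \<open>R = R\<^sub>2 R\<^sub>1\<close>
  a direct computation gives \<open>\<langle>R e\<^sub>1, e\<^sub>1\<rangle> = 1 - \<kappa>\<close>, which exceeds \<open>1 = \<parallel>e\<^sub>1\<parallel>\<^sup>2\<close>
  as soon as \<open>\<kappa> < 0\<close>.\<close>

lemma rot_mat_mult_nth:
  "(rot_mat t *v x) $ 1 = cos t * x $ 1 - sin t * x $ 2"
  "(rot_mat t *v x) $ 2 = sin t * x $ 1 + cos t * x $ 2"
  by (simp_all add: rot_mat_def matrix_vector_mult_def sum_2)

lemma norm_rot_mat_mult: "norm (rot_mat t *v x) = norm x"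
proof -
  have "(cos t * x$1 - sin t * x$2)\<^sup>2 + (sin t * x$1 + cos t * x$2)\<^sup>2 = (x$1)\<^sup>2 + (x$2)\<^sup>2"
    using sin_cos_squared_add[of t] unfolding power2_eq_square by algebra
  then show ?thesis
    by (simp add: norm_vec_def L2_set_def sum_2 rot_mat_mult_nth)
qed

lemma nonexpansive_rot_mat: "nonexpansive (\<lambda>x. rot_mat t *v x)"
  unfolding nonexpansive_def dist_norm
  by (simp add: matrix_vector_mult_diff_distrib[symmetric] norm_rot_mat_mult)

lemma nonexpansive_uminus: "nonexpansive N \<Longrightarrow> nonexpansive (\<lambda>x. - N x)"
  unfolding nonexpansive_def by (simp add: dist_minus)

lemma conically_nonexpansive_inner_le:
  assumes "conically_nonexpansive \<alpha> T" and "0 \<le> \<alpha>"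
  shows "inner (T x - T y) (x - y) \<le> (norm (x - y))\<^sup>2"
proof -
  obtain N where N: "nonexpansive N" and T: "\<And>x. T x = (1 - \<alpha>) *\<^sub>R x + \<alpha> *\<^sub>R N x"
    using assms(1) unfolding conically_nonexpansive_def by blast
  have "inner (N x - N y) (x - y) \<le> norm (N x - N y) * norm (x - y)"
    by (rule norm_cauchy_schwarz)
  also have "\<dots> \<le> norm (x - y) * norm (x - y)"
    using N unfolding nonexpansive_def dist_norm by (simp add: mult_right_mono)
  finally have "\<alpha> * inner (N x - N y) (x - y) \<le> \<alpha> * (norm (x - y))\<^sup>2"
    using assms(2) by (simp add: mult_left_mono power2_eq_square)
  moreover have "inner (T x - T y) (x - y)
      = (1 - \<alpha>) * (norm (x - y))\<^sup>2 + \<alpha> * inner (N x - N y) (x - y)"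
    by (simp add: T inner_diff_left inner_diff_right inner_add_left power2_norm_eq_inner
        algebra_simps)
  ultimately show ?thesis by (simp add: algebra_simps)
qed

lemma rotation_composition_first_column:
  fixes \<theta> \<alpha>1 \<alpha>2 :: real
  defines "R1 \<equiv> (\<lambda>x::real^2. (1 - \<alpha>1) *\<^sub>R x + \<alpha>1 *\<^sub>R (rot_mat \<theta> *v x))"
    and "R2 \<equiv> (\<lambda>x::real^2. (1 - \<alpha>2) *\<^sub>R x - \<alpha>2 *\<^sub>R (rot_mat \<theta> *v x))"
  shows "R2 (R1 (axis 1 1)) $ 1
    = 1 - (\<alpha>1 + \<alpha>2 - 2 * \<alpha>1 * \<alpha>2 * (sin \<theta>)\<^sup>2 - (\<alpha>1 - \<alpha>2) * cos \<theta>)"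
proof -
  have "R2 (R1 (axis 1 1)) $ 1 = (1 - \<alpha>2) * (1 - \<alpha>1 + \<alpha>1 * cos \<theta>)
      - \<alpha>2 * (cos \<theta> * (1 - \<alpha>1 + \<alpha>1 * cos \<theta>) - sin \<theta> * (\<alpha>1 * sin \<theta>))"
    by (simp add: R1_def R2_def rot_mat_mult_nth axis_def)
  also have "\<dots> = 1 - (\<alpha>1 + \<alpha>2 - 2 * \<alpha>1 * \<alpha>2 * (sin \<theta>)\<^sup>2 - (\<alpha>1 - \<alpha>2) * cos \<theta>)"
    using sin_cos_squared_add[of \<theta>] unfolding power2_eq_square by algebra
  finally show ?thesis .
qed

theorem mainTheorem9:
  fixes \<theta> \<alpha>1 \<alpha>2 :: real
  assumes "\<alpha>1 > 0" and "\<alpha>2 > 0"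
  defines "R1 \<equiv> (\<lambda>x::real^2. (1 - \<alpha>1) *\<^sub>R x + \<alpha>1 *\<^sub>R (rot_mat \<theta> *v x))"
    and "R2 \<equiv> (\<lambda>x::real^2. (1 - \<alpha>2) *\<^sub>R x - \<alpha>2 *\<^sub>R (rot_mat \<theta> *v x))"
    and "\<kappa> \<equiv> \<alpha>1 + \<alpha>2 - 2 * \<alpha>1 * \<alpha>2 * (sin \<theta>)^2 - (\<alpha>1 - \<alpha>2) * cos \<theta>"
  shows "conically_nonexpansive \<alpha>1 R1 \<and> conically_nonexpansive \<alpha>2 R2 \<and>
         (\<kappa> < 0 \<longrightarrow> \<not> (\<exists>\<alpha>>0. conically_nonexpansive \<alpha> (R2 \<circ> R1)))"
proof (intro conjI impI notI)
  show "conically_nonexpansive \<alpha>1 R1"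
    unfolding conically_nonexpansive_def R1_def using nonexpansive_rot_mat by blast
  show "conically_nonexpansive \<alpha>2 R2"
    unfolding conically_nonexpansive_def R2_def
    using nonexpansive_uminus[OF nonexpansive_rot_mat, of \<theta>] by fastforce
  assume "\<kappa> < 0" and "\<exists>\<alpha>>0. conically_nonexpansive \<alpha> (R2 \<circ> R1)"
  then obtain \<alpha> where "\<alpha> > 0" and R: "conically_nonexpansive \<alpha> (R2 \<circ> R1)" by blast
  have "inner ((R2 \<circ> R1) (axis 1 1) - (R2 \<circ> R1) 0) (axis 1 1 - 0) \<le> (norm (axis 1 1 - 0 :: real^2))\<^sup>2"
    using \<open>\<alpha> > 0\<close> by (intro conically_nonexpansive_inner_le[OF R]) simp
  moreover have "(R2 \<circ> R1) 0 = 0" by (simp add: R1_def R2_def)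
  ultimately have "R2 (R1 (axis 1 1)) $ 1 \<le> 1" by (simp add: inner_axis)
  with \<open>\<kappa> < 0\<close> show False
    using rotation_composition_first_column[of \<alpha>2 \<alpha>1 \<theta>] unfolding R1_def R2_def \<kappa>_def by simp
qed

end
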